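(* Let $A_n$ be the nilCoxeter algebra, let $\psi_n$ be the algebra involution of $A_n$ with $\psi_n(Y_i)=Y_{n-i}$, and let $A_n^{\psi}$ be the $A_n$-bimodule which is $A_n$ with left action by left multiplication and right action twisted by $\psi_n$ (i.e. $a\cdot t\cdot b=at\psi_n(b)$). Let $A_n^{\ast}=\mathrm{Hom}_{\mathbb{Q}}(A_n,\mathbb{Q})$ with the $A_n$-bimodule structure $(a f b)(y)=f(bya)$. Then $A_n^{\ast}$ and $A_n^{\psi}$ are isomorphic as $A_n$-bimodules.
   Context: $A_n$ is the unital $\mathbb{Q}$-algebra generated by $Y_1,\dots,Y_{n-1}$ with relations $Y_i^2=0$, $Y_iY_j=Y_jY_i$ for $|i-j|>1$, $Y_iY_{i+1}Y_i=Y_{i+1}Y_iY_{i+1}$. *)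

theory Defs
  imports Complex_Main
begin

text \<open>The free associative Q-algebra on Y_1..Y_(n-1): finitely supported
coefficient functions on words (lists of generator indices in {1..<n}).\<close>

definition FreeAlg :: "nat \<Rightarrow> (nat list \<Rightarrow> rat) set" where
  "FreeAlg n = {f. finite {w. f w \<noteq> 0} \<and> (\<forall>w. f w \<noteq> 0 \<longrightarrow> set w \<subseteq> {1..<n})}"

definition fmul :: "(nat list \<Rightarrow> rat) \<Rightarrow> (nat list \<Rightarrow> rat) \<Rightarrow> (nat list \<Rightarrow> rat)" (infixl "\<star>" 70) where
  "f \<star> g = (\<lambda>w. \<Sum>k\<le>length w. f (take k w) * g (drop k w))"

definition fadd :: "(nat list \<Rightarrow> rat) \<Rightarrow> (nat list \<Rightarrow> rat) \<Rightarrow> (nat list \<Rightarrow> rat)" where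
  "fadd f g = (\<lambda>w. f w + g w)"

definition fsub :: "(nat list \<Rightarrow> rat) \<Rightarrow> (nat list \<Rightarrow> rat) \<Rightarrow> (nat list \<Rightarrow> rat)" where
  "fsub f g = (\<lambda>w. f w - g w)"

definition fsmult :: "rat \<Rightarrow> (nat list \<Rightarrow> rat) \<Rightarrow> (nat list \<Rightarrow> rat)" where
  "fsmult c f = (\<lambda>w. c * f w)"

definition Ygen :: "nat \<Rightarrow> (nat list \<Rightarrow> rat)" where
  "Ygen i = (\<lambda>w. if w = [i] then 1 else 0)"

definition NilCoxRels :: "nat \<Rightarrow> (nat list \<Rightarrow> rat) set" where
  "NilCoxRels n =
     {Ygen i \<star> Ygen i | i. 1 \<le> i \<and> i < n}
   \<union> {fsub (Ygen i \<star> Ygen j) (Ygen j \<star> Ygen i) | i j.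
        1 \<le> i \<and> i < n \<and> 1 \<le> j \<and> j < n \<and> (i + 1 < j \<or> j + 1 < i)}
   \<union> {fsub (Ygen i \<star> Ygen (i+1) \<star> Ygen i) (Ygen (i+1) \<star> Ygen i \<star> Ygen (i+1)) | i.
        1 \<le> i \<and> i + 1 < n}"

inductive_set NilCoxIdeal :: "nat \<Rightarrow> (nat list \<Rightarrow> rat) set" for n where
  zero: "(\<lambda>_. 0) \<in> NilCoxIdeal n"
| gen: "r \<in> NilCoxRels n \<Longrightarrow> a \<in> FreeAlg n \<Longrightarrow> b \<in> FreeAlg n \<Longrightarrow> a \<star> r \<star> b \<in> NilCoxIdeal n"
| add: "x \<in> NilCoxIdeal n \<Longrightarrow> y \<in> NilCoxIdeal n \<Longrightarrow> fadd x y \<in> NilCoxIdeal n"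
| smult: "x \<in> NilCoxIdeal n \<Longrightarrow> fsmult c x \<in> NilCoxIdeal n"

text \<open>A_n = FreeAlg n / NilCoxIdeal n. Its elements are represented by elements of FreeAlg n.\<close>

definition psiF :: "nat \<Rightarrow> (nat list \<Rightarrow> rat) \<Rightarrow> (nat list \<Rightarrow> rat)" where
  "psiF n f = (\<lambda>w. f (map (\<lambda>i. n - i) w))"

text \<open>A_n^* = Hom_Q(A_n, Q): Q-linear functionals on the free algebra vanishing on the ideal.\<close>
definition NilCoxDual :: "nat \<Rightarrow> ((nat list \<Rightarrow> rat) \<Rightarrow> rat) set" where
  "NilCoxDual n = {\<phi>.
     (\<forall>x\<in>FreeAlg n. \<forall>y\<in>FreeAlg n. \<phi> (fadd x y) = \<phi> x + \<phi> y)
   \<and> (\<forall>c. \<forall>x\<in>FreeAlg n. \<phi> (fsmult c x) = c * \<phi> x)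
   \<and> (\<forall>x\<in>NilCoxIdeal n. \<phi> x = 0)}"

end

theory Submission
  imports Defs "HOL-Combinatorics.Transposition"
begin

(* Reading the letter Y_i as the transposition s_i of i - 1 and i turns a word into a permutation of
   {0..<n}, and the length of a word bounds the number of inversions of its permutation.  The
   Frobenius form frob n, the sum of the coefficients at the reduced words of the longest
   permutation w0, vanishes on the defining ideal: commutation and braid moves preserve length and
   permutation, and a word containing Y_i Y_i is never reduced.  Conjugation by w0 maps s_i to
   s_(n-i), so u psi(s) is a reduced word of w0 iff s u is; hence frob n (x psi(b)) = frob n (b x),
   and t |-> (y |-> frob n (y t)) is a bimodule map from A_n^psi to A_n^*.  It is bijective since
   the normal words (ascending chains Y_k ... Y_(n-1) followed by a normal word of A_(n-1)) span
   A_n, and every normal word v has a complement c such that c v' is a reduced word of w0 exactly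
   for v' = v: the functionals y |-> frob n (c y) form the dual basis. *)

section \<open>The free algebra\<close>

definition fword :: "nat list \<Rightarrow> nat list \<Rightarrow> rat" where
  "fword u = (\<lambda>w. if w = u then 1 else 0)"

lemma Ygen_eq_fword: "Ygen i = fword [i]"
  by (simp add: Ygen_def fword_def)

lemma fmul_assoc: "(f \<star> g) \<star> h = f \<star> (g \<star> h)"
proof (rule ext)
  fix w :: "nat list"
  let ?L = "length w"
  \<comment> \<open>both sides sum \<open>f x * g y * h z\<close> over the splittings \<open>w = x @ y @ z\<close>\<close>
  define F where "F j m = f (take j w) * g (take m (drop j w)) * h (drop m (drop j w))" for j m
  have "((f \<star> g) \<star> h) w = (\<Sum>k\<le>?L. \<Sum>j\<le>k. f (take j (take k w)) * g (drop j (take k w)) * h (drop k w))"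
    by (simp add: fmul_def sum_distrib_right)
  also have "\<dots> = (\<Sum>k\<le>?L. \<Sum>j\<le>k. F j (k - j))"
    by (intro sum.cong refl) (auto simp: F_def min_def drop_take)
  also have "\<dots> = (\<Sum>(j,m)\<in>{(i,j). i+j \<le> ?L}. F j m)"
    by (rule sum.triangle_reindex_eq[symmetric])
  also have "\<dots> = (\<Sum>(j,m)\<in>Sigma {..?L} (\<lambda>j. {..?L - j}). F j m)"
    by (intro sum.cong) auto
  also have "\<dots> = (\<Sum>j\<le>?L. \<Sum>m\<le>?L - j. F j m)"
    by (simp add: sum.Sigma)
  also have "\<dots> = (f \<star> (g \<star> h)) w"
    by (simp add: fmul_def F_def sum_distrib_left mult.assoc)
  finally show "((f \<star> g) \<star> h) w = (f \<star> (g \<star> h)) w" .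
qed

lemma fmul_lincomb_right:
  "f \<star> (\<lambda>w. \<Sum>i\<in>A. c i * g i w) = (\<lambda>w. \<Sum>i\<in>A. c i * (f \<star> g i) w)"
  by (rule ext) (simp add: fmul_def sum_distrib_left sum.swap[of _ A] mult.left_commute)

lemma fmul_lincomb_left:
  "(\<lambda>w. \<Sum>i\<in>A. c i * g i w) \<star> f = (\<lambda>w. \<Sum>i\<in>A. c i * (g i \<star> f) w)"
  by (rule ext) (simp add: fmul_def sum_distrib_left sum_distrib_right sum.swap[of _ A] mult.assoc)

lemma fmul_fadd_right: "f \<star> fadd g h = fadd (f \<star> g) (f \<star> h)"
  by (rule ext) (simp add: fmul_def fadd_def distrib_left sum.distrib)

lemma fmul_fadd_left: "fadd g h \<star> f = fadd (g \<star> f) (h \<star> f)"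
  by (rule ext) (simp add: fmul_def fadd_def distrib_right sum.distrib)

lemma fmul_fsub_right: "f \<star> fsub g h = fsub (f \<star> g) (f \<star> h)"
  by (rule ext) (simp add: fmul_def fsub_def right_diff_distrib sum_subtractf)

lemma fmul_fsub_left: "fsub g h \<star> f = fsub (g \<star> f) (h \<star> f)"
  by (rule ext) (simp add: fmul_def fsub_def left_diff_distrib sum_subtractf)

lemma fmul_fsmult_right: "f \<star> fsmult c g = fsmult c (f \<star> g)"
  by (rule ext) (simp add: fmul_def fsmult_def sum_distrib_left mult.left_commute)

lemma fmul_fsmult_left: "fsmult c g \<star> f = fsmult c (g \<star> f)"
  by (rule ext) (simp add: fmul_def fsmult_def sum_distrib_left mult.assoc)

lemma fmul_zero_right: "f \<star> (\<lambda>_. 0) = (\<lambda>_. 0)"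
  by (rule ext) (simp add: fmul_def)

lemma fmul_zero_left: "(\<lambda>_. 0) \<star> f = (\<lambda>_. 0)"
  by (rule ext) (simp add: fmul_def)

lemma fword_fmul_apply:
  "(fword u \<star> g) w = (if take (length u) w = u then g (drop (length u) w) else 0)"
proof -
  have "(fword u \<star> g) w = (\<Sum>k\<le>length w. if k = length u \<and> take (length u) w = u
                                           then g (drop (length u) w) else 0)"
    unfolding fmul_def fword_def by (intro sum.cong refl) auto
  also have "\<dots> = (if take (length u) w = u then g (drop (length u) w) else 0)"
    by (auto simp: sum.delta dest: arg_cong[of _ _ length])
  finally show ?thesis .
qed

lemma fword_fmul_fword: "fword u \<star> fword v = fword (u @ v)"
  by (rule ext, simp only: fword_fmul_apply)
    (auto simp: fword_def append_eq_conv_conj, metis append_take_drop_id)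

lemma fword_Nil_fmul: "fword [] \<star> f = f"
  by (rule ext) (simp add: fword_fmul_apply)

lemma fmul_fword_Nil: "f \<star> fword [] = f"
proof (rule ext)
  fix w
  have "(f \<star> fword []) w = (\<Sum>k\<le>length w. if k = length w then f w else 0)"
    unfolding fmul_def fword_def by (intro sum.cong refl) auto
  then show "(f \<star> fword []) w = f w" by simp
qed

abbreviation supp :: "(nat list \<Rightarrow> rat) \<Rightarrow> nat list set" where
  "supp f \<equiv> {w. f w \<noteq> 0}"

lemma FreeAlgD:
  assumes "f \<in> FreeAlg n"
  shows FreeAlg_finite_supp: "finite (supp f)"
    and FreeAlg_supp_letters: "f w \<noteq> 0 \<Longrightarrow> set w \<subseteq> {1..<n}"
  using assms by (auto simp: FreeAlg_def)

lemma fword_in_FreeAlg: "set u \<subseteq> {1..<n} \<Longrightarrow> fword u \<in> FreeAlg n"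
  by (auto simp: FreeAlg_def fword_def)

lemma FreeAlg_lincomb:
  assumes "finite A" "\<And>i. i \<in> A \<Longrightarrow> g i \<in> FreeAlg n"
  shows "(\<lambda>w. \<Sum>i\<in>A. c i * g i w) \<in> FreeAlg n"
proof -
  have "supp (\<lambda>w. \<Sum>i\<in>A. c i * g i w) \<subseteq> (\<Union>i\<in>A. supp (g i))"
    by (auto intro: sum.neutral)
  moreover have "finite (\<Union>i\<in>A. supp (g i))"
    using assms by (auto dest: FreeAlg_finite_supp)
  ultimately show ?thesis
    using assms(2) unfolding FreeAlg_def by (auto dest: finite_subset)
qed

lemma FreeAlg_expansion: "f \<in> FreeAlg n \<Longrightarrow> f = (\<lambda>w. \<Sum>u\<in>supp f. f u * fword u w)"
  by (rule ext) (simp add: fword_def FreeAlg_finite_supp if_distrib cong: if_cong)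

lemma FreeAlg_fmul:
  assumes f: "f \<in> FreeAlg n" and g: "g \<in> FreeAlg n"
  shows "f \<star> g \<in> FreeAlg n"
proof -
  have "f \<star> g = (\<lambda>w. \<Sum>u\<in>supp f. f u * (\<lambda>w. \<Sum>v\<in>supp g. g v * fword (u @ v) w) w)"
    by (subst FreeAlg_expansion[OF f], subst FreeAlg_expansion[OF g])
      (simp add: fmul_lincomb_left fmul_lincomb_right fword_fmul_fword)
  also have "\<dots> \<in> FreeAlg n"
    using FreeAlg_supp_letters[OF f] FreeAlg_supp_letters[OF g]
    by (intro FreeAlg_lincomb fword_in_FreeAlg FreeAlg_finite_supp[OF f] FreeAlg_finite_supp[OF g]) auto
  finally show ?thesis .
qed

lemma FreeAlg_fsmult: "f \<in> FreeAlg n \<Longrightarrow> fsmult c f \<in> FreeAlg n"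
  using FreeAlg_lincomb[of "{()}" "\<lambda>_. f" n "\<lambda>_. c"] by (simp add: fsmult_def)

lemma FreeAlg_fsub: "f \<in> FreeAlg n \<Longrightarrow> g \<in> FreeAlg n \<Longrightarrow> fsub f g \<in> FreeAlg n"
  using FreeAlg_lincomb[of "{True, False}" "\<lambda>b. if b then f else g" n "\<lambda>b. if b then 1 else -1"]
  by (simp add: fsub_def)

definition word_psi :: "nat \<Rightarrow> nat list \<Rightarrow> nat list" where
  "word_psi n w = map (\<lambda>i. n - i) w"

lemma word_psi_letters: "set w \<subseteq> {1..<n} \<Longrightarrow> set (word_psi n w) \<subseteq> {1..<n}"
  by (auto simp: word_psi_def subset_iff)

lemma word_psi_involution: "set w \<subseteq> {..n} \<Longrightarrow> word_psi n (word_psi n w) = w"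
  by (induction w) (auto simp: word_psi_def)

lemma psiF_expansion:
  assumes b: "b \<in> FreeAlg n"
  shows "psiF n b = (\<lambda>w. \<Sum>s\<in>supp b. b s * fword (word_psi n s) w)"
proof (rule ext)
  fix w
  have "w = word_psi n s \<longleftrightarrow> s = word_psi n w" if "s \<in> supp b" for s
  proof -
    have "set s \<subseteq> {..n}" using FreeAlg_supp_letters[OF b, of s] that by auto
    moreover have "s = word_psi n w \<Longrightarrow> set w \<subseteq> {..n}"
      using FreeAlg_supp_letters[OF b, of s] that by (auto simp: word_psi_def subset_iff)
    ultimately show ?thesis using word_psi_involution by metis
  qed
  then have "(\<Sum>s\<in>supp b. b s * fword (word_psi n s) w)
           = (\<Sum>s\<in>supp b. if s = word_psi n w then b (word_psi n w) else 0)"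
    by (intro sum.cong refl) (auto simp: fword_def)
  also have "\<dots> = psiF n b w"
    using FreeAlg_finite_supp[OF b] by (simp add: psiF_def word_psi_def)
  finally show "psiF n b w = (\<Sum>s\<in>supp b. b s * fword (word_psi n s) w)" ..
qed

lemma FreeAlg_psiF: "b \<in> FreeAlg n \<Longrightarrow> psiF n b \<in> FreeAlg n"
  by (subst psiF_expansion)
    (auto intro!: FreeAlg_lincomb fword_in_FreeAlg word_psi_letters
          dest: FreeAlg_finite_supp FreeAlg_supp_letters)

section \<open>Words modulo the defining ideal\<close>

lemma NilCoxIdeal_lincomb:
  assumes "finite A" "\<And>i. i \<in> A \<Longrightarrow> g i \<in> NilCoxIdeal n"
  shows "(\<lambda>w. \<Sum>i\<in>A. c i * g i w) \<in> NilCoxIdeal n"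
  using assms
proof (induction A rule: finite_induct)
  case empty
  then show ?case by (simp add: NilCoxIdeal.zero)
next
  case (insert a F)
  have "(\<lambda>w. \<Sum>i\<in>insert a F. c i * g i w) = fadd (fsmult (c a) (g a)) (\<lambda>w. \<Sum>i\<in>F. c i * g i w)"
    using insert by (simp add: fadd_def fsmult_def)
  then show ?case
    using insert by (simp add: NilCoxIdeal.add NilCoxIdeal.smult)
qed

lemma NilCoxIdeal_fmul:
  assumes "x \<in> NilCoxIdeal n" "a \<in> FreeAlg n" "b \<in> FreeAlg n"
  shows "a \<star> x \<star> b \<in> NilCoxIdeal n"
  using assms(1)
proof (induction x rule: NilCoxIdeal.induct)
  case zero
  then show ?case by (simp add: fmul_zero_right fmul_zero_left NilCoxIdeal.zero)
next
  case (gen r a' b')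
  have "(a \<star> a') \<star> r \<star> (b' \<star> b) \<in> NilCoxIdeal n"
    using gen assms by (intro NilCoxIdeal.gen FreeAlg_fmul) auto
  then show ?case by (simp add: fmul_assoc)
next
  case (add x y)
  then show ?case by (simp add: fmul_fadd_left fmul_fadd_right NilCoxIdeal.add)
next
  case (smult x c)
  then show ?case by (simp add: fmul_fsmult_left fmul_fsmult_right NilCoxIdeal.smult)
qed

lemma FreeAlg_mono: "m \<le> n \<Longrightarrow> FreeAlg m \<subseteq> FreeAlg n"
  unfolding FreeAlg_def by (auto simp: subset_iff) (meson less_le_trans)

lemma NilCoxRels_mono: "m \<le> n \<Longrightarrow> NilCoxRels m \<subseteq> NilCoxRels n"
  unfolding NilCoxRels_def by (intro Un_mono Collect_mono impI; elim exE conjE; fastforce)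

lemma NilCoxIdeal_mono: "m \<le> n \<Longrightarrow> NilCoxIdeal m \<subseteq> NilCoxIdeal n"
proof
  fix x assume mn: "m \<le> n" and "x \<in> NilCoxIdeal m"
  from this(2) show "x \<in> NilCoxIdeal n"
  proof (induction x rule: NilCoxIdeal.induct)
    case (gen r a b)
    then show ?case
      using FreeAlg_mono[OF mn] NilCoxRels_mono[OF mn] by (blast intro: NilCoxIdeal.gen)
  qed (auto intro: NilCoxIdeal.intros)
qed

definition word_cong :: "nat \<Rightarrow> nat list \<Rightarrow> nat list \<Rightarrow> bool" where
  "word_cong n x y \<longleftrightarrow> fsub (fword x) (fword y) \<in> NilCoxIdeal n"

definition word_null :: "nat \<Rightarrow> nat list \<Rightarrow> bool" where
  "word_null n x \<longleftrightarrow> fword x \<in> NilCoxIdeal n"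

lemma word_cong_refl: "word_cong n x x"
proof -
  have "fsub (fword x) (fword x) = (\<lambda>_. 0)" by (rule ext) (simp add: fsub_def)
  then show ?thesis by (simp add: word_cong_def NilCoxIdeal.zero)
qed

lemma word_cong_sym: "word_cong n x y \<Longrightarrow> word_cong n y x"
  using NilCoxIdeal.smult[of "fsub (fword x) (fword y)" n "-1"]
  by (simp add: word_cong_def fsub_def fsmult_def)

lemma word_cong_trans: "word_cong n x y \<Longrightarrow> word_cong n y z \<Longrightarrow> word_cong n x z"
  using NilCoxIdeal.add[of "fsub (fword x) (fword y)" n "fsub (fword y) (fword z)"]
  by (simp add: word_cong_def fsub_def fadd_def)

lemma word_null_cong: "word_cong n x y \<Longrightarrow> word_null n y \<Longrightarrow> word_null n x"
  using NilCoxIdeal.add[of "fsub (fword x) (fword y)" n "fword y"]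
  by (simp add: word_cong_def word_null_def fsub_def fadd_def)

lemma word_cong_mono: "word_cong m x y \<Longrightarrow> m \<le> n \<Longrightarrow> word_cong n x y"
  using NilCoxIdeal_mono by (auto simp: word_cong_def)

lemma word_null_mono: "word_null m x \<Longrightarrow> m \<le> n \<Longrightarrow> word_null n x"
  using NilCoxIdeal_mono by (auto simp: word_null_def)

lemma word_cong_append:
  assumes "word_cong n x y" "set p \<subseteq> {1..<n}" "set s \<subseteq> {1..<n}"
  shows "word_cong n (p @ x @ s) (p @ y @ s)"
  using NilCoxIdeal_fmul[of "fsub (fword x) (fword y)" n "fword p" "fword s"] assms
  by (simp add: word_cong_def fword_in_FreeAlg fmul_fsub_left fmul_fsub_right fword_fmul_fword)

lemma word_null_append:
  assumes "word_null n x" "set p \<subseteq> {1..<n}" "set s \<subseteq> {1..<n}"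
  shows "word_null n (p @ x @ s)"
  using NilCoxIdeal_fmul[of "fword x" n "fword p" "fword s"] assms
  by (simp add: word_null_def fword_in_FreeAlg fword_fmul_fword)

lemma NilCoxRels_in_context:
  assumes "r \<in> NilCoxRels n" "set p \<subseteq> {1..<n}" "set s \<subseteq> {1..<n}"
  shows "fword p \<star> r \<star> fword s \<in> NilCoxIdeal n"
  using assms by (intro NilCoxIdeal.gen fword_in_FreeAlg)

lemma word_null_square:
  assumes "1 \<le> i" "i < n" "set p \<subseteq> {1..<n}" "set s \<subseteq> {1..<n}"
  shows "word_null n (p @ [i, i] @ s)"
proof -
  have "Ygen i \<star> Ygen i \<in> NilCoxRels n"
    using assms unfolding NilCoxRels_def by blast
  from NilCoxRels_in_context[OF this assms(3,4)] show ?thesis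
    by (simp add: word_null_def Ygen_eq_fword fword_fmul_fword)
qed

lemma word_cong_commute:
  assumes "1 \<le> i" "i < n" "1 \<le> j" "j < n" "i + 1 < j \<or> j + 1 < i"
    and "set p \<subseteq> {1..<n}" "set s \<subseteq> {1..<n}"
  shows "word_cong n (p @ [i, j] @ s) (p @ [j, i] @ s)"
proof -
  have "fsub (Ygen i \<star> Ygen j) (Ygen j \<star> Ygen i) \<in> NilCoxRels n"
    using assms unfolding NilCoxRels_def by blast
  from NilCoxRels_in_context[OF this assms(6,7)] show ?thesis
    by (simp add: word_cong_def Ygen_eq_fword fmul_fsub_left fmul_fsub_right fword_fmul_fword)
qed

lemma word_cong_braid:
  assumes "1 \<le> i" "i + 1 < n" "set p \<subseteq> {1..<n}" "set s \<subseteq> {1..<n}"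
  shows "word_cong n (p @ [i, i + 1, i] @ s) (p @ [i + 1, i, i + 1] @ s)"
proof -
  have "fsub (Ygen i \<star> Ygen (i + 1) \<star> Ygen i) (Ygen (i + 1) \<star> Ygen i \<star> Ygen (i + 1))
          \<in> NilCoxRels n"
    using assms unfolding NilCoxRels_def by blast
  from NilCoxRels_in_context[OF this assms(3,4)] show ?thesis
    by (simp add: word_cong_def Ygen_eq_fword fmul_fsub_left fmul_fsub_right fword_fmul_fword)
qed

lemma word_cong_commute_past:
  assumes "1 \<le> j" "j < n" "set c \<subseteq> {1..<n}" "\<forall>x\<in>set c. j + 1 < x \<or> x + 1 < j"
    and "set p \<subseteq> {1..<n}" "set s \<subseteq> {1..<n}"
  shows "word_cong n (p @ j # c @ s) (p @ c @ j # s)"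
  using assms
proof (induction c arbitrary: p)
  case Nil
  then show ?case by (simp add: word_cong_refl)
next
  case (Cons x c)
  have "word_cong n (p @ [j, x] @ c @ s) (p @ [x, j] @ c @ s)"
    using Cons.prems by (intro word_cong_commute) auto
  moreover have "word_cong n ((p @ [x]) @ j # c @ s) ((p @ [x]) @ c @ j # s)"
    using Cons.prems by (intro Cons.IH) auto
  ultimately show ?case by (auto intro: word_cong_trans)
qed

section \<open>Words as permutations\<close>

definition sref :: "nat \<Rightarrow> nat \<Rightarrow> nat" where
  "sref i = Transposition.transpose (i - 1) i"

fun word_perm :: "nat list \<Rightarrow> nat \<Rightarrow> nat" where
  "word_perm [] = id"
| "word_perm (i # w) = sref i \<circ> word_perm w"

lemma sref_apply: "sref i x = (if x + 1 = i then i else if x = i \<and> 0 < i then i - 1 else x)"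
  by (auto simp: sref_def Transposition.transpose_def)

lemma sref_sref [simp]: "sref i (sref i x) = x"
  by (simp add: sref_def)

definition w0 :: "nat \<Rightarrow> nat \<Rightarrow> nat" where
  "w0 n x = (if x < n then n - 1 - x else x)"

lemma word_perm_append: "word_perm (u @ v) = word_perm u \<circ> word_perm v"
  by (induction u) auto

lemma word_perm_rev_comp: "word_perm (rev w) \<circ> word_perm w = id"
proof (induction w)
  case (Cons i w)
  have "word_perm (rev (i # w)) \<circ> word_perm (i # w)
        = word_perm (rev w) \<circ> (sref i \<circ> sref i) \<circ> word_perm w"
    by (simp add: word_perm_append comp_assoc)
  also have "sref i \<circ> sref i = id"
    by auto
  finally show ?case
    using Cons.IH by (simp only: comp_id)
qed simp

lemma word_perm_comp_rev: "word_perm w \<circ> word_perm (rev w) = id"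
  using word_perm_rev_comp[of "rev w"] by simp

lemma inj_word_perm: "inj (word_perm w)"
  using word_perm_rev_comp by (metis inj_on_id inj_on_imageI2)

lemma word_perm_cancel_left: "word_perm u \<circ> f = word_perm u \<circ> g \<Longrightarrow> f = g"
  by (metis comp_assoc comp_id word_perm_rev_comp id_comp)

lemma comp_eq_id_commute:
  assumes "f' \<circ> f = id" "f \<circ> f' = id"
  shows "f \<circ> g = id \<longleftrightarrow> g \<circ> f = id"
  by (metis assms comp_assoc comp_id id_comp)

lemma w0_w0 [simp]: "w0 n (w0 n x) = x"
  by (simp add: w0_def)

lemma w0_involution: "w0 n \<circ> w0 n = id"
  by (rule ext) simp

lemma sref_conj_w0: "1 \<le> i \<Longrightarrow> i < n \<Longrightarrow> sref (n - i) = w0 n \<circ> sref i \<circ> w0 n"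
  by (rule ext) (auto simp: sref_apply w0_def)

lemma word_perm_psi:
  "set w \<subseteq> {1..<n} \<Longrightarrow> word_perm (word_psi n w) = w0 n \<circ> word_perm w \<circ> w0 n"
proof (induction w)
  case Nil
  then show ?case by (simp add: word_psi_def w0_involution)
next
  case (Cons i w)
  then show ?case
    by (auto simp: word_psi_def sref_conj_w0 fun_eq_iff w0_def)
qed

lemma sref_commute: "i + 1 < j \<or> j + 1 < i \<Longrightarrow> sref i \<circ> sref j = sref j \<circ> sref i"
  by (rule ext) (auto simp: sref_apply)

lemma sref_braid: "1 \<le> i \<Longrightarrow> sref i \<circ> sref (i + 1) \<circ> sref i = sref (i + 1) \<circ> sref i \<circ> sref (i + 1)"
  by (rule ext) (auto simp: sref_apply)

definition inversions :: "nat \<Rightarrow> (nat \<Rightarrow> nat) \<Rightarrow> nat" where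
  "inversions n s = card {(a, b). a < b \<and> b < n \<and> s b < s a}"

lemma inversions_sref_comp:
  assumes "inj s"
  shows "inversions n (sref i \<circ> s) \<le> inversions n s + 1"
proof -
  let ?P = "{(a, b). a < b \<and> b < n \<and> s b < s a}"
  \<comment> \<open>the only new inversion can be the pair that \<open>s\<close> maps onto \<open>{i - 1, i}\<close>\<close>
  let ?E = "{(a, b). a < b \<and> b < n \<and> {s a, s b} = {i - 1, i} \<and> 0 < i}"
  have fin: "finite ?P" "finite ?E"
    by (rule finite_subset[of _ "{..<n} \<times> {..<n}"]; auto)+
  have "{(a, b). a < b \<and> b < n \<and> (sref i \<circ> s) b < (sref i \<circ> s) a} \<subseteq> ?P \<union> ?E"
    using injD[OF assms]
    by (auto simp: sref_apply split: if_splits)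
  then have "inversions n (sref i \<circ> s) \<le> card (?P \<union> ?E)"
    unfolding inversions_def by (rule card_mono[rotated]) (use fin in auto)
  also have "\<dots> \<le> card ?P + card ?E" by (rule card_Un_le)
  also have "card ?E \<le> 1"
  proof (rule card_le_Suc0_iff_eq[OF fin(2), THEN iffD2, unfolded One_nat_def[symmetric]], clarify)
    fix a b c d
    assume "a < b" "{s a, s b} = {i - 1, i}" "c < d" "{s c, s d} = {i - 1, i}" "0 < i"
    then have "s a = s c \<and> s b = s d \<or> s a = s d \<and> s b = s c"
      by (auto simp: doubleton_eq_iff)
    then have "a = c \<and> b = d \<or> a = d \<and> b = c"
      using injD[OF assms] by blast
    with \<open>a < b\<close> \<open>c < d\<close> show "a = c \<and> b = d" by auto
  qed
  finally show ?thesis unfolding inversions_def by simp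
qed

lemma inversions_word_perm: "inversions n (word_perm w) \<le> length w"
proof (induction w)
  case Nil
  show ?case by (auto simp: inversions_def card_eq_0_iff)
next
  case (Cons i w)
  then show ?case
    using inversions_sref_comp[OF inj_word_perm, of n i w] by (simp only: word_perm.simps length_Cons)
qed

definition longest_length :: "nat \<Rightarrow> nat" where
  "longest_length n = (\<Sum>i<n. i)"

lemma inversions_w0: "inversions n (w0 n) = longest_length n"
proof -
  have "{(a, b). a < b \<and> b < n \<and> w0 n b < w0 n a} = {(a, b). a < b \<and> b < n}"
    by (auto simp: w0_def)
  moreover have "card {(a, b). a < b \<and> b < n} = longest_length n" for n :: nat
  proof (induction n)
    case (Suc m)
    have "{(a, b). a < b \<and> b < Suc m} = {(a, b). a < b \<and> b < m} \<union> (\<lambda>a. (a, m)) ` {..<m}"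
      by auto
    moreover have "card ({(a, b). a < b \<and> b < m} \<union> (\<lambda>a. (a, m)) ` {..<m})
                   = card {(a, b). a < b \<and> b < m} + card ((\<lambda>a. (a, m)) ` {..<m})"
      by (rule card_Un_disjoint) (auto intro: finite_subset[of _ "{..<m} \<times> {..<m}"])
    moreover have "card ((\<lambda>a. (a, m)) ` {..<m}) = m"
      by (subst card_image) (auto simp: inj_on_def)
    ultimately show ?case
      using Suc by (simp add: longest_length_def)
  qed (simp add: longest_length_def)
  ultimately show ?thesis unfolding inversions_def by simp
qed

lemma longest_length_le: "word_perm w = w0 n \<Longrightarrow> longest_length n \<le> length w"
  using inversions_word_perm[of n w] inversions_w0[of n] by simp

section \<open>The Frobenius form\<close>

definition reduced_w0 :: "nat \<Rightarrow> nat list set" where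
  "reduced_w0 n = {w. set w \<subseteq> {1..<n} \<and> length w = longest_length n \<and> word_perm w = w0 n}"

definition frob :: "nat \<Rightarrow> (nat list \<Rightarrow> rat) \<Rightarrow> rat" where
  "frob n f = (\<Sum>w\<in>reduced_w0 n. f w)"

lemma finite_reduced_w0: "finite (reduced_w0 n)"
proof (rule finite_subset)
  show "reduced_w0 n \<subseteq> {w. set w \<subseteq> {1..<n} \<and> length w = longest_length n}"
    by (auto simp: reduced_w0_def)
qed (simp add: finite_lists_length_eq)

lemma frob_fword: "frob n (fword u) = (if u \<in> reduced_w0 n then 1 else 0)"
  by (simp add: frob_def fword_def finite_reduced_w0)

lemma frob_lincomb: "frob n (\<lambda>w. \<Sum>i\<in>A. c i * g i w) = (\<Sum>i\<in>A. c i * frob n (g i))"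
  unfolding frob_def by (simp add: sum_distrib_left sum.swap[of _ A])

lemma frob_fadd: "frob n (fadd f g) = frob n f + frob n g"
  by (simp add: frob_def fadd_def sum.distrib)

lemma frob_fsub: "frob n (fsub f g) = frob n f - frob n g"
  by (simp add: frob_def fsub_def sum_subtractf)

lemma frob_fsmult: "frob n (fsmult c f) = c * frob n f"
  by (simp add: frob_def fsmult_def sum_distrib_left)

lemma frob_zero: "frob n (\<lambda>_. 0) = 0"
  by (simp add: frob_def)

lemma frob_fmul_fword_expansion:
  assumes "a \<in> FreeAlg n" "b \<in> FreeAlg n"
  shows "frob n (a \<star> r \<star> b) = (\<Sum>u\<in>supp a. \<Sum>s\<in>supp b. a u * b s * frob n (fword u \<star> r \<star> fword s))"
proof -
  have "frob n (a \<star> r \<star> b) = (\<Sum>u\<in>supp a. a u * frob n (fword u \<star> r \<star> b))"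
    by (subst FreeAlg_expansion[OF assms(1)]) (simp only: fmul_lincomb_left frob_lincomb)
  also have "\<dots> = (\<Sum>u\<in>supp a. a u * (\<Sum>s\<in>supp b. b s * frob n (fword u \<star> r \<star> fword s)))"
    by (subst FreeAlg_expansion[OF assms(2)]) (simp only: fmul_lincomb_right frob_lincomb)
  finally show ?thesis
    by (simp add: sum_distrib_left mult.assoc)
qed

lemma square_not_reduced_w0: "u @ [i, i] @ s \<notin> reduced_w0 n"
proof
  assume red: "u @ [i, i] @ s \<in> reduced_w0 n"
  have "word_perm (u @ s) = word_perm (u @ [i, i] @ s)"
    by (simp add: word_perm_append fun_eq_iff)
  then have "longest_length n \<le> length (u @ s)"
    using red by (intro longest_length_le) (simp add: reduced_w0_def)
  then show False
    using red by (simp add: reduced_w0_def)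
qed

lemma reduced_w0_subst:
  assumes "word_perm x = word_perm y" "length x = length y" "set x = set y"
  shows "u @ x @ s \<in> reduced_w0 n \<longleftrightarrow> u @ y @ s \<in> reduced_w0 n"
  using assms by (simp add: reduced_w0_def word_perm_append)

lemma frob_NilCoxRels:
  assumes "r \<in> NilCoxRels n" "a \<in> FreeAlg n" "b \<in> FreeAlg n"
  shows "frob n (a \<star> r \<star> b) = 0"
proof -
  have "frob n (fword u \<star> r \<star> fword s) = 0" for u s
    using assms(1) unfolding NilCoxRels_def
  proof (elim UnE CollectE exE conjE)
    fix i
    assume "r = Ygen i \<star> Ygen i"
    then show ?thesis
      using square_not_reduced_w0[of u i s n] by (simp add: Ygen_eq_fword fword_fmul_fword frob_fword)
  next
    fix i j
    assume "r = fsub (Ygen i \<star> Ygen j) (Ygen j \<star> Ygen i)" "i + 1 < j \<or> j + 1 < i"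
    then show ?thesis
      using reduced_w0_subst[of "[i, j]" "[j, i]" u s n] sref_commute[of i j]
      by (simp add: Ygen_eq_fword fword_fmul_fword fmul_fsub_left fmul_fsub_right frob_fsub
                    frob_fword insert_commute)
  next
    fix i
    assume "r = fsub (Ygen i \<star> Ygen (i + 1) \<star> Ygen i) (Ygen (i + 1) \<star> Ygen i \<star> Ygen (i + 1))"
      "1 \<le> i"
    then show ?thesis
      using reduced_w0_subst[of "[i, i + 1, i]" "[i + 1, i, i + 1]" u s n] sref_braid[of i]
      by (simp add: Ygen_eq_fword fword_fmul_fword fmul_fsub_left fmul_fsub_right frob_fsub
                    frob_fword insert_commute comp_assoc)
  qed
  then show ?thesis
    by (simp add: frob_fmul_fword_expansion[OF assms(2,3)])
qed

lemma frob_NilCoxIdeal: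
  assumes "x \<in> NilCoxIdeal n" "a \<in> FreeAlg n" "b \<in> FreeAlg n"
  shows "frob n (a \<star> x \<star> b) = 0"
  using assms(1)
proof (induction x rule: NilCoxIdeal.induct)
  case zero
  then show ?case by (simp add: fmul_zero_right fmul_zero_left frob_zero)
next
  case (gen r a' b')
  have "frob n ((a \<star> a') \<star> r \<star> (b' \<star> b)) = 0"
    using gen assms by (intro frob_NilCoxRels FreeAlg_fmul) auto
  then show ?case by (simp add: fmul_assoc)
next
  case (add x y)
  then show ?case by (simp add: fmul_fadd_left fmul_fadd_right frob_fadd)
next
  case (smult x c)
  then show ?case by (simp add: fmul_fsmult_left fmul_fsmult_right frob_fsmult)
qed

lemma reduced_w0_twist:
  assumes u: "set u \<subseteq> {1..<n}" and s: "set s \<subseteq> {1..<n}"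
  shows "u @ word_psi n s \<in> reduced_w0 n \<longleftrightarrow> s @ u \<in> reduced_w0 n"
proof -
  let ?A = "word_perm u" and ?S = "word_perm s" and ?W = "w0 n"
  have "word_perm (u @ word_psi n s) = ?W \<longleftrightarrow> ?A \<circ> (?W \<circ> ?S) \<circ> ?W = ?W"
    using s by (simp add: word_perm_append word_perm_psi comp_assoc)
  also have "\<dots> \<longleftrightarrow> ?A \<circ> (?W \<circ> ?S) = id"
    by (metis w0_involution comp_assoc comp_id)
  also have "\<dots> \<longleftrightarrow> (?W \<circ> ?S) \<circ> ?A = id"
    by (rule comp_eq_id_commute[OF word_perm_rev_comp word_perm_comp_rev])
  also have "\<dots> \<longleftrightarrow> word_perm (s @ u) = ?W"
    by (metis w0_involution comp_assoc id_comp comp_id word_perm_append)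
  finally show ?thesis
    using u s word_psi_letters[OF s] by (auto simp: reduced_w0_def word_psi_def)
qed

lemma frob_twist:
  assumes x: "x \<in> FreeAlg n" and b: "b \<in> FreeAlg n"
  shows "frob n (x \<star> psiF n b) = frob n (b \<star> x)"
proof -
  have "frob n (x \<star> psiF n b)
        = (\<Sum>u\<in>supp x. x u * (\<Sum>s\<in>supp b. b s * frob n (fword (u @ word_psi n s))))"
    by (subst FreeAlg_expansion[OF x], subst psiF_expansion[OF b])
      (simp only: fmul_lincomb_left fmul_lincomb_right frob_lincomb fword_fmul_fword)
  also have "\<dots> = (\<Sum>u\<in>supp x. x u * (\<Sum>s\<in>supp b. b s * frob n (fword (s @ u))))"
    using FreeAlg_supp_letters[OF x] FreeAlg_supp_letters[OF b]
    by (intro sum.cong refl arg_cong2[where f = times]) (simp add: frob_fword reduced_w0_twist)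
  also have "\<dots> = (\<Sum>s\<in>supp b. b s * (\<Sum>u\<in>supp x. x u * frob n (fword (s @ u))))"
    by (simp add: sum_distrib_left sum.swap[of _ "supp x"] mult.left_commute)
  also have "\<dots> = frob n (b \<star> x)"
  proof -
    have "frob n (b \<star> x) = (\<Sum>s\<in>supp b. b s * (\<Sum>u\<in>supp x. x u * frob n (fword (s @ u))))"
      by (subst FreeAlg_expansion[OF b], subst FreeAlg_expansion[OF x])
        (simp only: fmul_lincomb_left fmul_lincomb_right frob_lincomb fword_fmul_fword)
    then show ?thesis ..
  qed
  finally show ?thesis .
qed

section \<open>Normal words\<close>

(* keeps the chains [k..<Suc m] of normal words from being unfolded *)
declare upt_Suc [simp del]

fun normal_words :: "nat \<Rightarrow> nat list set" where
  "normal_words 0 = {[]}"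
| "normal_words (Suc m) = {[k..<Suc m] @ u | k u. 1 \<le> k \<and> k \<le> Suc m \<and> u \<in> normal_words m}"

declare normal_words.simps(2) [simp del]

lemma normal_words_SucE:
  assumes "v \<in> normal_words (Suc m)"
  obtains k u where "v = [k..<Suc m] @ u" "1 \<le> k" "k \<le> Suc m" "u \<in> normal_words m"
  using assms by (auto simp: normal_words.simps(2))

lemma normal_words_SucI:
  "1 \<le> k \<Longrightarrow> k \<le> Suc m \<Longrightarrow> u \<in> normal_words m \<Longrightarrow> [k..<Suc m] @ u \<in> normal_words (Suc m)"
  by (auto simp: normal_words.simps(2))

lemma normal_words_letters: "v \<in> normal_words n \<Longrightarrow> set v \<subseteq> {1..<n}"
proof (induction n arbitrary: v)
  case (Suc m)
  then show ?case by (fastforce elim: normal_words_SucE)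
qed simp

lemma finite_normal_words: "finite (normal_words n)"
proof (induction n)
  case (Suc m)
  have "normal_words (Suc m) = (\<lambda>(k, u). [k..<Suc m] @ u) ` ({1..Suc m} \<times> normal_words m)"
    by (auto intro: normal_words_SucI elim!: normal_words_SucE)
  then show ?case using Suc by simp
qed simp

lemma Nil_in_normal_words: "[] \<in> normal_words n"
proof (induction n)
  case (Suc m)
  then show ?case
    using normal_words_SucI[of "Suc m" m "[]"] by simp
qed simp

definition spanned_by_normal :: "nat \<Rightarrow> nat list \<Rightarrow> bool" where
  "spanned_by_normal n w \<longleftrightarrow> word_null n w \<or> (\<exists>v\<in>normal_words n. word_cong n w v)"

lemma spanned_by_normal_cong:
  "word_cong n x y \<Longrightarrow> spanned_by_normal n y \<Longrightarrow> spanned_by_normal n x"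
  unfolding spanned_by_normal_def using word_cong_trans word_null_cong by blast

lemma spanned_by_normal_chain_append:
  assumes "spanned_by_normal m w" "1 \<le> k" "k \<le> Suc m"
  shows "spanned_by_normal (Suc m) ([k..<Suc m] @ w)"
proof -
  have chain: "set [k..<Suc m] \<subseteq> {1..<Suc m}"
    using assms by auto
  from assms(1) consider "word_null m w" | v where "v \<in> normal_words m" "word_cong m w v"
    unfolding spanned_by_normal_def by blast
  then show ?thesis
  proof cases
    case 1
    then have "word_null (Suc m) ([k..<Suc m] @ w @ [])"
      using chain by (intro word_null_append) (auto elim: word_null_mono)
    then show ?thesis by (simp add: spanned_by_normal_def)
  next
    case 2
    then have "word_cong (Suc m) ([k..<Suc m] @ w @ []) ([k..<Suc m] @ v @ [])"
      using chain by (intro word_cong_append) (auto elim: word_cong_mono)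
    moreover have "[k..<Suc m] @ v \<in> normal_words (Suc m)"
      using 2 assms by (intro normal_words_SucI)
    ultimately show ?thesis
      unfolding spanned_by_normal_def by auto
  qed
qed

lemma word_cong_Cons_chain_far:
  assumes "1 \<le> j" "j < n" "j + 1 < k" "set u \<subseteq> {1..<n}"
  shows "word_cong n (j # [k..<n] @ u) ([k..<n] @ j # u)"
  using word_cong_commute_past[of j n "[k..<n]" "[]" u] assms by auto

lemma word_cong_Cons_chain_inside:
  assumes "1 \<le> k" "k < j" "j < n" "set u \<subseteq> {1..<n}"
  shows "word_cong n (j # [k..<n] @ u) ([k..<n] @ (j - 1) # u)"
proof -
  let ?a = "[k..<j - 1]" and ?r = "[Suc j..<n]"
  have chain: "[k..<n] = ?a @ [j - 1, j] @ ?r"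
    using assms upt_add_eq_append[of k "j - 1" "n - (j - 1)"] by (simp add: upt_conv_Cons)
  have letters: "set ?a \<subseteq> {1..<n}" "set ?r \<subseteq> {1..<n}" "1 \<le> j - 1" "j - 1 + 1 = j"
    using assms by auto
  have "word_cong n ([] @ j # ?a @ [j - 1, j] @ ?r @ u) ([] @ ?a @ j # [j - 1, j] @ ?r @ u)"
    using assms letters by (intro word_cong_commute_past) auto
  moreover have "word_cong n (?a @ [j, j - 1, j] @ ?r @ u) (?a @ [j - 1, j, j - 1] @ ?r @ u)"
    using word_cong_braid[of "j - 1" n ?a "?r @ u"] assms letters
    by (auto intro: word_cong_sym)
  moreover have "word_cong n ((?a @ [j - 1, j]) @ (j - 1) # ?r @ u) ((?a @ [j - 1, j]) @ ?r @ (j - 1) # u)"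
    using assms letters by (intro word_cong_commute_past) auto
  ultimately show ?thesis
    unfolding chain by (auto elim!: word_cong_trans)
qed

lemma word_cong_Cons_chain:
  assumes "1 \<le> j" "j \<le> m" "1 \<le> k" "k \<le> Suc m" "j \<noteq> k" "j + 1 \<noteq> k" "set u \<subseteq> {1..<m}"
  obtains j' where "j' \<in> {1..<m}" "word_cong (Suc m) (j # [k..<Suc m] @ u) ([k..<Suc m] @ j' # u)"
proof (cases "j + 1 < k")
  case True
  then have "word_cong (Suc m) (j # [k..<Suc m] @ u) ([k..<Suc m] @ j # u)"
    using assms by (intro word_cong_Cons_chain_far) auto
  then show ?thesis
    using True assms by (intro that) auto
next
  case False
  then have "word_cong (Suc m) (j # [k..<Suc m] @ u) ([k..<Suc m] @ (j - 1) # u)"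
    using assms by (intro word_cong_Cons_chain_inside) auto
  then show ?thesis
    using False assms by (intro that) auto
qed

lemma spanned_by_normal_Cons:
  assumes spanned: "\<And>w. set w \<subseteq> {1..<m} \<Longrightarrow> spanned_by_normal m w"
    and v: "v \<in> normal_words (Suc m)" and j: "1 \<le> j" "j \<le> m"
  shows "spanned_by_normal (Suc m) (j # v)"
proof -
  obtain k u where v_eq: "v = [k..<Suc m] @ u" and k: "1 \<le> k" "k \<le> Suc m"
    and u: "u \<in> normal_words m"
    using v by (rule normal_words_SucE)
  have u_letters: "set u \<subseteq> {1..<m}"
    using u by (rule normal_words_letters)
  consider "j + 1 = k" | "j = k" | "j \<noteq> k" "j + 1 \<noteq> k" by blast
  then show ?thesis
  proof cases
    case 1
    then have "j # v = [j..<Suc m] @ u"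
      using j by (simp add: v_eq upt_conv_Cons)
    then have "j # v \<in> normal_words (Suc m)"
      using j u by (simp add: normal_words_SucI)
    then show ?thesis
      unfolding spanned_by_normal_def using word_cong_refl by blast
  next
    case 2
    have "word_null (Suc m) ([] @ [j, j] @ [Suc j..<Suc m] @ u)"
      using j u_letters by (intro word_null_square) auto
    then show ?thesis
      using 2 j by (simp add: v_eq upt_conv_Cons spanned_by_normal_def)
  next
    case 3
    obtain j' where j': "j' \<in> {1..<m}"
      and cong: "word_cong (Suc m) (j # [k..<Suc m] @ u) ([k..<Suc m] @ j' # u)"
      using word_cong_Cons_chain[OF j k 3 u_letters] by blast
    have "spanned_by_normal (Suc m) ([k..<Suc m] @ j' # u)"
      using j' k u_letters by (intro spanned_by_normal_chain_append spanned) auto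
    with cong show ?thesis
      unfolding v_eq by (rule spanned_by_normal_cong)
  qed
qed

lemma spanned_by_normal_words: "set w \<subseteq> {1..<n} \<Longrightarrow> spanned_by_normal n w"
proof (induction n arbitrary: w)
  case 0
  then show ?case by (auto simp: spanned_by_normal_def intro: word_cong_refl)
next
  case (Suc m)
  show ?case
    using Suc.prems
  proof (induction w)
    case Nil
    then show ?case
      unfolding spanned_by_normal_def using Nil_in_normal_words word_cong_refl by blast
  next
    case (Cons j w)
    then have j: "1 \<le> j" "j \<le> m" and w: "set w \<subseteq> {1..<Suc m}" by auto
    have letters: "set [j] \<subseteq> {1..<Suc m}" "set [] \<subseteq> {1..<Suc m}"
      using j by auto
    from Cons.IH[OF w] consider "word_null (Suc m) w"
      | v where "v \<in> normal_words (Suc m)" "word_cong (Suc m) w v"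
      unfolding spanned_by_normal_def by blast
    then show ?case
    proof cases
      case 1
      then show ?thesis
        using word_null_append[OF 1 letters] by (simp add: spanned_by_normal_def)
    next
      case 2
      then show ?thesis
        using word_cong_append[OF 2(2) letters] spanned_by_normal_Cons[OF Suc.IH 2(1) j]
        by (simp add: spanned_by_normal_cong)
    qed
  qed
qed

definition cycle :: "nat \<Rightarrow> nat \<Rightarrow> nat" where
  "cycle m x = (if x < m then x + 1 else if x = m then 0 else x)"

lemma word_perm_upt_1: "word_perm [1..<Suc m] = cycle m"
proof (induction m)
  case (Suc m)
  have "word_perm [1..<Suc (Suc m)] = cycle m \<circ> sref (Suc m)"
    using Suc by (simp add: upt_Suc word_perm_append)
  then show ?case
    by (auto simp: fun_eq_iff cycle_def sref_apply)
qed (simp add: fun_eq_iff cycle_def)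

lemma word_perm_map_Suc: "set y \<subseteq> {1..<m} \<Longrightarrow> word_perm (map Suc y) \<circ> cycle m = cycle m \<circ> word_perm y"
proof (induction y)
  case (Cons i y)
  have "set y \<subseteq> {1..<m}"
    using Cons.prems by simp
  note IH = Cons.IH[OF this]
  have "sref (Suc i) \<circ> cycle m = cycle m \<circ> sref i"
    using Cons.prems by (auto simp: fun_eq_iff cycle_def sref_apply)
  then have "sref (Suc i) \<circ> (word_perm (map Suc y) \<circ> cycle m) = cycle m \<circ> (sref i \<circ> word_perm y)"
    by (simp only: IH flip: comp_assoc)
  then show ?case
    by (simp only: word_perm.simps list.map comp_assoc)
qed simp

lemma cycle_w0: "cycle m \<circ> w0 m = w0 (Suc m)"
  by (auto simp: fun_eq_iff cycle_def w0_def)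

lemma longest_length_Suc: "longest_length (Suc m) = longest_length m + m"
  by (simp add: longest_length_def)

lemma normal_words_complement_exists:
  "v \<in> normal_words n \<Longrightarrow> \<exists>y. set y \<subseteq> {1..<n} \<and> y @ v \<in> reduced_w0 n"
proof (induction n arbitrary: v)
  case 0
  then show ?case by (auto simp: reduced_w0_def longest_length_def fun_eq_iff w0_def)
next
  case (Suc m)
  obtain k u where v: "v = [k..<Suc m] @ u" and k: "1 \<le> k" "k \<le> Suc m"
    and u: "u \<in> normal_words m"
    using Suc.prems by (rule normal_words_SucE)
  obtain yu where yu: "set yu \<subseteq> {1..<m}" "yu @ u \<in> reduced_w0 m"
    using Suc.IH[OF u] by blast
  let ?y = "map Suc yu @ [1..<k]"
  have "[1..<Suc m] = [1..<k] @ [k..<Suc m]"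
    using k upt_add_eq_append[of 1 k "Suc m - k"] by simp
  then have "word_perm [1..<k] \<circ> word_perm [k..<Suc m] = cycle m"
    by (metis word_perm_append word_perm_upt_1)
  then have "word_perm (?y @ v) = word_perm (map Suc yu) \<circ> cycle m \<circ> word_perm u"
    by (simp only: v word_perm_append append_assoc flip: comp_assoc)
  also have "\<dots> = w0 (Suc m)"
    using yu by (simp add: word_perm_map_Suc comp_assoc reduced_w0_def word_perm_append cycle_w0)
  finally have "?y @ v \<in> reduced_w0 (Suc m)"
    using yu k normal_words_letters[OF u] by (auto simp: reduced_w0_def v longest_length_Suc)
  moreover have "set ?y \<subseteq> {1..<Suc m}"
    using yu k by auto
  ultimately show ?case by blast
qed

lemma word_perm_fix: "set w \<subseteq> {1..<m} \<Longrightarrow> m \<le> x \<Longrightarrow> word_perm w x = x"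
  by (induction w) (auto simp: sref_apply)

lemma word_perm_upt_apply: "1 \<le> k \<Longrightarrow> k \<le> Suc m \<Longrightarrow> word_perm [k..<Suc m] m = k - 1"
proof (induction "Suc m - k" arbitrary: k)
  case (Suc d)
  then have "word_perm [Suc k..<Suc m] m = k"
    by (cases "k = m") auto
  moreover have "[k..<Suc m] = k # [Suc k..<Suc m]"
    using Suc by (simp add: upt_conv_Cons)
  ultimately show ?case
    using Suc by (simp add: sref_apply)
qed simp

lemma normal_words_word_perm_inj:
  "v \<in> normal_words n \<Longrightarrow> v' \<in> normal_words n \<Longrightarrow> word_perm v = word_perm v' \<Longrightarrow> v = v'"
proof (induction n arbitrary: v v')
  case (Suc m)
  obtain k u where v: "v = [k..<Suc m] @ u" "1 \<le> k" "k \<le> Suc m" "u \<in> normal_words m"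
    using Suc.prems(1) by (rule normal_words_SucE)
  obtain k' u' where v': "v' = [k'..<Suc m] @ u'" "1 \<le> k'" "k' \<le> Suc m" "u' \<in> normal_words m"
    using Suc.prems(2) by (rule normal_words_SucE)
  \<comment> \<open>\<open>u\<close> fixes \<open>m\<close> and the chain sends it to \<open>k - 1\<close>, so the permutation determines \<open>k\<close>\<close>
  have "word_perm v m = k - 1" "word_perm v' m = k' - 1"
    using v v' word_perm_fix[OF normal_words_letters, of _ m m]
    by (simp_all add: word_perm_append word_perm_upt_apply)
  then have "k = k'"
    using Suc.prems(3) v v' by simp
  then have "word_perm [k..<Suc m] \<circ> word_perm u = word_perm [k..<Suc m] \<circ> word_perm u'"
    using Suc.prems(3) v v' by (simp only: word_perm_append)
  then have "u = u'"
    using Suc.IH v v' by (blast dest: word_perm_cancel_left)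
  then show ?case
    using v v' \<open>k = k'\<close> by simp
qed simp

definition complement :: "nat \<Rightarrow> nat list \<Rightarrow> nat list" where
  "complement n v = (SOME y. set y \<subseteq> {1..<n} \<and> y @ v \<in> reduced_w0 n)"

lemma complement:
  assumes "v \<in> normal_words n"
  shows complement_letters: "set (complement n v) \<subseteq> {1..<n}"
    and complement_reduced_w0: "complement n v @ v \<in> reduced_w0 n"
  using someI_ex[OF normal_words_complement_exists[OF assms]] unfolding complement_def by blast+

lemma complement_other_not_reduced_w0:
  assumes "v \<in> normal_words n" "v' \<in> normal_words n" "v' \<noteq> v"
  shows "complement n v @ v' \<notin> reduced_w0 n"
proof
  assume "complement n v @ v' \<in> reduced_w0 n"
  then have "word_perm (complement n v) \<circ> word_perm v' = word_perm (complement n v) \<circ> word_perm v"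
    using complement_reduced_w0[OF assms(1)] by (simp add: reduced_w0_def word_perm_append)
  then show False
    using normal_words_word_perm_inj[OF assms(2,1)] assms(3) by (blast dest: word_perm_cancel_left)
qed

section \<open>The dual basis\<close>

lemma fword_normal_in_FreeAlg: "v \<in> normal_words n \<Longrightarrow> fword v \<in> FreeAlg n"
  by (intro fword_in_FreeAlg normal_words_letters)

lemma fword_complement_in_FreeAlg: "v \<in> normal_words n \<Longrightarrow> fword (complement n v) \<in> FreeAlg n"
  by (intro fword_in_FreeAlg complement_letters)

definition normal_coeff :: "nat \<Rightarrow> nat list \<Rightarrow> (nat list \<Rightarrow> rat) \<Rightarrow> rat" where
  "normal_coeff n v t = frob n (fword (complement n v) \<star> t)"

definition normal_part :: "nat \<Rightarrow> (nat list \<Rightarrow> rat) \<Rightarrow> nat list \<Rightarrow> rat" where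
  "normal_part n t = (\<lambda>w. \<Sum>v\<in>normal_words n. normal_coeff n v t * fword v w)"

lemma normal_coeff_lincomb:
  "normal_coeff n v (\<lambda>w. \<Sum>i\<in>A. c i * g i w) = (\<Sum>i\<in>A. c i * normal_coeff n v (g i))"
  by (simp add: normal_coeff_def fmul_lincomb_right frob_lincomb)

lemma normal_coeff_fadd: "normal_coeff n v (fadd f g) = normal_coeff n v f + normal_coeff n v g"
  by (simp add: normal_coeff_def fmul_fadd_right frob_fadd)

lemma normal_coeff_fword:
  "v \<in> normal_words n \<Longrightarrow> v' \<in> normal_words n \<Longrightarrow> normal_coeff n v (fword v') = (if v' = v then 1 else 0)"
  by (simp add: normal_coeff_def fword_fmul_fword frob_fword complement_reduced_w0
                complement_other_not_reduced_w0)

lemma normal_coeff_NilCoxIdeal: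
  assumes "v \<in> normal_words n" "x \<in> NilCoxIdeal n"
  shows "normal_coeff n v x = 0"
proof -
  have "frob n (fword (complement n v) \<star> x \<star> fword []) = 0"
    by (rule frob_NilCoxIdeal[OF assms(2) fword_complement_in_FreeAlg[OF assms(1)]])
      (simp add: fword_in_FreeAlg)
  then show ?thesis
    by (simp add: normal_coeff_def fmul_fword_Nil)
qed

lemma FreeAlg_normal_part: "normal_part n t \<in> FreeAlg n"
  unfolding normal_part_def by (intro FreeAlg_lincomb fword_normal_in_FreeAlg finite_normal_words)

lemma fword_minus_normal_part:
  assumes "set w \<subseteq> {1..<n}"
  shows "fsub (fword w) (normal_part n (fword w)) \<in> NilCoxIdeal n"
proof -
  from spanned_by_normal_words[OF assms]
  consider "word_null n w" | v0 where "v0 \<in> normal_words n" "word_cong n w v0"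
    unfolding spanned_by_normal_def by blast
  then show ?thesis
  proof cases
    case 1
    then have "normal_part n (fword w) = (\<lambda>_. 0)"
      by (simp add: normal_part_def word_null_def normal_coeff_NilCoxIdeal)
    then show ?thesis
      using 1 by (simp add: word_null_def fsub_def)
  next
    case 2
    have "normal_coeff n v (fword w) = normal_coeff n v (fword v0)" if "v \<in> normal_words n" for v
    proof -
      have "fword w = fadd (fsub (fword w) (fword v0)) (fword v0)"
        by (rule ext) (simp add: fsub_def fadd_def)
      then have "normal_coeff n v (fword w)
                 = normal_coeff n v (fsub (fword w) (fword v0)) + normal_coeff n v (fword v0)"
        by (metis normal_coeff_fadd)
      then show ?thesis
        using 2 that by (simp add: normal_coeff_NilCoxIdeal word_cong_def)
    qed
    then have "normal_part n (fword w) = fword v0"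
      using 2 unfolding normal_part_def
      by (intro ext) (simp add: normal_coeff_fword finite_normal_words
                                if_distrib[where f = "\<lambda>c. c * _"] cong: if_cong)
    then show ?thesis
      using 2 by (simp add: word_cong_def)
  qed
qed

lemma minus_normal_part:
  assumes t: "t \<in> FreeAlg n"
  shows "fsub t (normal_part n t) \<in> NilCoxIdeal n"
proof -
  have "fsub t (normal_part n t) = (\<lambda>w. \<Sum>u\<in>supp t. t u * fsub (fword u) (normal_part n (fword u)) w)"
  proof (rule ext)
    fix w
    have "normal_part n t w = (\<Sum>u\<in>supp t. t u * normal_part n (fword u) w)"
      by (subst FreeAlg_expansion[OF t])
        (simp add: normal_part_def normal_coeff_lincomb sum_distrib_right sum_distrib_left
                   sum.swap[of _ "supp t"] mult.assoc)
    moreover have "t w = (\<Sum>u\<in>supp t. t u * fword u w)"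
      by (subst FreeAlg_expansion[OF t]) simp
    ultimately show "fsub t (normal_part n t) w
        = (\<Sum>u\<in>supp t. t u * fsub (fword u) (normal_part n (fword u)) w)"
      by (simp add: fsub_def right_diff_distrib sum_subtractf)
  qed
  also have "\<dots> \<in> NilCoxIdeal n"
    using FreeAlg_supp_letters[OF t]
    by (intro NilCoxIdeal_lincomb fword_minus_normal_part FreeAlg_finite_supp[OF t]) simp
  finally show ?thesis .
qed

lemma NilCoxDual_lincomb:
  assumes \<phi>: "\<phi> \<in> NilCoxDual n" and "finite A" "\<And>i. i \<in> A \<Longrightarrow> g i \<in> FreeAlg n"
  shows "\<phi> (\<lambda>w. \<Sum>i\<in>A. c i * g i w) = (\<Sum>i\<in>A. c i * \<phi> (g i))"
  using assms(2,3)
proof (induction A rule: finite_induct)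
  case empty
  have "(\<lambda>_. 0) \<in> NilCoxIdeal n"
    by (rule NilCoxIdeal.zero)
  then show ?case
    using \<phi> by (simp add: NilCoxDual_def)
next
  case (insert a F)
  have "(\<lambda>w. \<Sum>i\<in>insert a F. c i * g i w) = fadd (fsmult (c a) (g a)) (\<lambda>w. \<Sum>i\<in>F. c i * g i w)"
    using insert by (simp add: fadd_def fsmult_def)
  moreover have "fsmult (c a) (g a) \<in> FreeAlg n" "(\<lambda>w. \<Sum>i\<in>F. c i * g i w) \<in> FreeAlg n"
    using insert by (auto intro: FreeAlg_fsmult FreeAlg_lincomb)
  ultimately show ?case
    using \<phi> insert by (simp add: NilCoxDual_def)
qed

lemma frob_pairing_in_NilCoxDual:
  assumes t: "t \<in> FreeAlg n"
  shows "(\<lambda>y. frob n (y \<star> t)) \<in> NilCoxDual n"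
  unfolding NilCoxDual_def
proof (intro CollectI conjI ballI allI)
  fix x assume "x \<in> NilCoxIdeal n"
  from frob_NilCoxIdeal[OF this _ t, of "fword []"] show "frob n (x \<star> t) = 0"
    by (simp add: fword_Nil_fmul fword_in_FreeAlg)
qed (simp_all add: fmul_fadd_left frob_fadd fmul_fsmult_left frob_fsmult)

lemma frob_pairing_eq_zero_iff:
  assumes t: "t \<in> FreeAlg n"
  shows "(\<forall>y\<in>FreeAlg n. frob n (y \<star> t) = 0) \<longleftrightarrow> t \<in> NilCoxIdeal n"
proof
  assume "\<forall>y\<in>FreeAlg n. frob n (y \<star> t) = 0"
  then have "normal_part n t = (\<lambda>_. 0)"
    by (simp add: normal_part_def normal_coeff_def fword_complement_in_FreeAlg)
  then show "t \<in> NilCoxIdeal n"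
    using minus_normal_part[OF t] by (simp add: fsub_def)
next
  assume "t \<in> NilCoxIdeal n"
  show "\<forall>y\<in>FreeAlg n. frob n (y \<star> t) = 0"
  proof
    fix y assume "y \<in> FreeAlg n"
    from frob_NilCoxIdeal[OF \<open>t \<in> NilCoxIdeal n\<close> this, of "fword []"]
    show "frob n (y \<star> t) = 0"
      by (simp add: fmul_fword_Nil fword_in_FreeAlg)
  qed
qed

lemma NilCoxDual_eq_frob_pairing:
  assumes \<phi>: "\<phi> \<in> NilCoxDual n"
  shows "\<exists>t\<in>FreeAlg n. \<forall>y\<in>FreeAlg n. \<phi> y = frob n (y \<star> t)"
proof
  define t where "t = (\<lambda>w. \<Sum>v\<in>normal_words n. \<phi> (fword v) * psiF n (fword (complement n v)) w)"
  show "t \<in> FreeAlg n"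
    unfolding t_def
    by (intro FreeAlg_lincomb FreeAlg_psiF fword_in_FreeAlg finite_normal_words complement_letters)
  show "\<forall>y\<in>FreeAlg n. \<phi> y = frob n (y \<star> t)"
  proof
    fix y assume y: "y \<in> FreeAlg n"
    have "frob n (y \<star> t) = (\<Sum>v\<in>normal_words n. \<phi> (fword v) * normal_coeff n v y)"
      unfolding t_def fmul_lincomb_right frob_lincomb normal_coeff_def
      using y by (intro sum.cong refl arg_cong2[where f = times] frob_twist fword_complement_in_FreeAlg)
    also have "\<dots> = (\<Sum>v\<in>normal_words n. normal_coeff n v y * \<phi> (fword v))"
      by (simp only: mult.commute)
    also have "\<dots> = \<phi> (normal_part n y)"
      unfolding normal_part_def
      by (rule NilCoxDual_lincomb[OF \<phi> finite_normal_words fword_normal_in_FreeAlg, symmetric])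
    also have "\<phi> (normal_part n y) = \<phi> y"
    proof -
      have "\<phi> y = \<phi> (fadd (fsub y (normal_part n y)) (normal_part n y))"
        by (rule arg_cong[where f = \<phi>]) (simp add: fun_eq_iff fsub_def fadd_def)
      also have "\<dots> = \<phi> (fsub y (normal_part n y)) + \<phi> (normal_part n y)"
        using \<phi> FreeAlg_fsub[OF y FreeAlg_normal_part] FreeAlg_normal_part
        unfolding NilCoxDual_def by blast
      also have "\<phi> (fsub y (normal_part n y)) = 0"
        using \<phi> minus_normal_part[OF y] unfolding NilCoxDual_def by blast
      finally show ?thesis by simp
    qed
    finally show "\<phi> y = frob n (y \<star> t)" ..
  qed
qed

theorem mainTheorem3:
  fixes n :: nat
  shows "\<exists>\<Phi> :: (nat list \<Rightarrow> rat) \<Rightarrow> ((nat list \<Rightarrow> rat) \<Rightarrow> rat).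
     (\<forall>t\<in>FreeAlg n. \<Phi> t \<in> NilCoxDual n)
   \<and> (\<forall>s\<in>FreeAlg n. \<forall>t\<in>FreeAlg n. \<forall>y\<in>FreeAlg n. \<Phi> (fadd s t) y = \<Phi> s y + \<Phi> t y)
   \<and> (\<forall>c. \<forall>t\<in>FreeAlg n. \<forall>y\<in>FreeAlg n. \<Phi> (fsmult c t) y = c * \<Phi> t y)
   \<and> (\<forall>t\<in>FreeAlg n. (\<forall>y\<in>FreeAlg n. \<Phi> t y = 0) \<longleftrightarrow> t \<in> NilCoxIdeal n)
   \<and> (\<forall>\<phi>\<in>NilCoxDual n. \<exists>t\<in>FreeAlg n. \<forall>y\<in>FreeAlg n. \<phi> y = \<Phi> t y)
   \<and> (\<forall>a\<in>FreeAlg n. \<forall>b\<in>FreeAlg n. \<forall>t\<in>FreeAlg n. \<forall>y\<in>FreeAlg n.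
        \<Phi> (a \<star> t \<star> psiF n b) y = \<Phi> t (b \<star> y \<star> a))"
proof (intro exI[of _ "\<lambda>t y. frob n (y \<star> t)"] conjI ballI allI)
  fix a b t y
  assume "a \<in> FreeAlg n" "b \<in> FreeAlg n" "t \<in> FreeAlg n" "y \<in> FreeAlg n"
  then have "frob n ((y \<star> a \<star> t) \<star> psiF n b) = frob n (b \<star> (y \<star> a \<star> t))"
    by (intro frob_twist FreeAlg_fmul)
  then show "frob n (y \<star> (a \<star> t \<star> psiF n b)) = frob n ((b \<star> y \<star> a) \<star> t)"
    by (simp add: fmul_assoc)
qed (simp_all add: frob_pairing_in_NilCoxDual frob_pairing_eq_zero_iff NilCoxDual_eq_frob_pairing
                   fmul_fadd_right frob_fadd fmul_fsmult_right frob_fsmult)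

end
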